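(* Let $s,\Delta_s$ be positive integers and $G$ an undirected graph. There exists an $(s,\Delta_s)$-dissolution for $G$ if and only if there exists a $(\Delta_s,s)$-dissolution for $G$.
   Context: For $V'\subseteq V(G)$ let $Z(V',G):=\{(x,y)\mid x\in V',\ y\in V(G)\setminus V',\ \{x,y\}\in E(G)\}$. For positive integers $s,\Delta_s$, an $(s,\Delta_s)$-dissolution for $G$ is a pair $(D,z)$ with $D\subset V(G)$ and $z\colon Z(D,G)\to\{0,\dots,s\}$ such that (a) each $v'\in D$ satisfies $\sum_{(v',v)\in Z(D,G)} z(v',v)=s$, and (b) each $v\in V(G)\setminus D$ satisfies $\sum_{(v',v)\in Z(D,G)} z(v',v)=\Delta_s$. *)

theory Defs
  imports Main
begin

definition graph :: "'a set \<Rightarrow> ('a \<Rightarrow> 'a \<Rightarrow> bool) \<Rightarrow> bool" where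
  "graph V E \<longleftrightarrow> finite V \<and> (\<forall>x y. E x y \<longrightarrow> x \<in> V \<and> y \<in> V) \<and>
     (\<forall>x y. E x y \<longrightarrow> E y x) \<and> (\<forall>x. \<not> E x x)"

definition Zset :: "'a set \<Rightarrow> 'a set \<Rightarrow> ('a \<Rightarrow> 'a \<Rightarrow> bool) \<Rightarrow> ('a \<times> 'a) set" where
  "Zset V' V E = {(x, y). x \<in> V' \<and> y \<in> V - V' \<and> E x y}"

text \<open>An (s, d)-dissolution (D, z); z is only relevant on Z(D,G), where its values lie in {0..s}.\<close>

definition is_dissolution ::
  "nat \<Rightarrow> nat \<Rightarrow> 'a set \<Rightarrow> ('a \<Rightarrow> 'a \<Rightarrow> bool) \<Rightarrow> 'a set \<Rightarrow> ('a \<times> 'a \<Rightarrow> nat) \<Rightarrow> bool" where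
  "is_dissolution s d V E D z \<longleftrightarrow>
     D \<subset> V \<and>
     (\<forall>p \<in> Zset D V E. z p \<le> s) \<and>
     (\<forall>v' \<in> D. (\<Sum>p \<in> {p \<in> Zset D V E. fst p = v'}. z p) = s) \<and>
     (\<forall>v \<in> V - D. (\<Sum>p \<in> {p \<in> Zset D V E. snd p = v}. z p) = d)"

definition has_dissolution :: "nat \<Rightarrow> nat \<Rightarrow> 'a set \<Rightarrow> ('a \<Rightarrow> 'a \<Rightarrow> bool) \<Rightarrow> bool" where
  "has_dissolution s d V E \<longleftrightarrow> (\<exists>D z. is_dissolution s d V E D z)"

end

theory Submission
  imports Defs
begin

text \<open>Complementing the dissolved set and reversing every pair turns an
  \<open>(s, d)\<close>-dissolution \<open>(D, z)\<close> into a \<open>(d, s)\<close>-dissolution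
  \<open>(V - D, z \<circ> swap)\<close>: by symmetry of the edge relation, \<open>Z(V - D)\<close> consists
  exactly of the reversed pairs of \<open>Z(D)\<close>, so the sums at the heads and at the tails
  of the pairs trade places. Positivity of \<open>d\<close> guarantees that \<open>D\<close> is nonempty,
  hence \<open>V - D\<close> is again a proper subset of \<open>V\<close>.\<close>

lemma Zset_Diff_eq_swap_image:
  assumes "\<And>x y. E x y \<Longrightarrow> E y x" and "D \<subseteq> V"
  shows "Zset (V - D) V E = prod.swap ` Zset D V E"
  using assms unfolding Zset_def by (auto simp: image_iff)

lemma finite_Zset:
  assumes "finite V" and "D \<subseteq> V"
  shows "finite (Zset D V E)"
proof (rule finite_subset)
  show "Zset D V E \<subseteq> V \<times> V" using assms(2) unfolding Zset_def by auto
qed (use assms in simp)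

lemma sum_swap_image_fst:
  "(\<Sum>p \<in> {p \<in> prod.swap ` A. fst p = v}. f (prod.swap p)) = (\<Sum>p \<in> {p \<in> A. snd p = v}. f p)"
proof -
  have "{p \<in> prod.swap ` A. fst p = v} = prod.swap ` {p \<in> A. snd p = v}" by auto
  then show ?thesis by (simp add: sum.reindex)
qed

lemma sum_swap_image_snd:
  "(\<Sum>p \<in> {p \<in> prod.swap ` A. snd p = v}. f (prod.swap p)) = (\<Sum>p \<in> {p \<in> A. fst p = v}. f p)"
proof -
  have "{p \<in> prod.swap ` A. snd p = v} = prod.swap ` {p \<in> A. fst p = v}" by auto
  then show ?thesis by (simp add: sum.reindex)
qed

lemma is_dissolution_nonempty:
  assumes "is_dissolution s d V E D z" and "0 < d"
  shows "D \<noteq> {}"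
proof
  assume "D = {}"
  moreover obtain v where "v \<in> V - D"
    using assms(1) unfolding is_dissolution_def by auto
  ultimately have "(\<Sum>p \<in> {p \<in> Zset {} V E. snd p = v}. z p) = d"
    using assms(1) unfolding is_dissolution_def by auto
  moreover have "Zset {} V E = {}" unfolding Zset_def by simp
  ultimately show False using assms(2) by simp
qed

lemma is_dissolution_le_tail_weight:
  assumes "is_dissolution s d V E D z" and "finite V" and "p \<in> Zset D V E"
  shows "z p \<le> d"
proof -
  have fin: "finite (Zset D V E)"
    using assms(1,2) by (intro finite_Zset) (auto simp: is_dissolution_def)
  have "snd p \<in> V - D" using assms(3) unfolding Zset_def by auto
  then have tail: "(\<Sum>q \<in> {q \<in> Zset D V E. snd q = snd p}. z q) = d"
    using assms(1) unfolding is_dissolution_def by blast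
  have "z p \<le> (\<Sum>q \<in> {q \<in> Zset D V E. snd q = snd p}. z q)"
    by (rule member_le_sum) (use assms(3) fin in auto)
  with tail show ?thesis by simp
qed

lemma is_dissolution_complement:
  assumes "graph V E" and "0 < d" and dis: "is_dissolution s d V E D z"
  shows "is_dissolution d s V E (V - D) (z \<circ> prod.swap)"
proof -
  have DV: "D \<subset> V"
    and head: "\<forall>v \<in> D. (\<Sum>p \<in> {p \<in> Zset D V E. fst p = v}. z p) = s"
    and tail: "\<forall>v \<in> V - D. (\<Sum>p \<in> {p \<in> Zset D V E. snd p = v}. z p) = d"
    using dis unfolding is_dissolution_def by auto
  have Z: "Zset (V - D) V E = prod.swap ` Zset D V E"
    using assms(1) DV by (intro Zset_Diff_eq_swap_image) (auto simp: graph_def)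
  have "V - D \<subset> V"
    using DV is_dissolution_nonempty[OF dis assms(2)] by auto
  moreover have "\<forall>p \<in> Zset (V - D) V E. (z \<circ> prod.swap) p \<le> d"
    using is_dissolution_le_tail_weight[OF dis] assms(1) by (auto simp: Z graph_def)
  moreover have "\<forall>v \<in> V - D. (\<Sum>p \<in> {p \<in> Zset (V - D) V E. fst p = v}. (z \<circ> prod.swap) p) = d"
    using tail by (simp add: Z sum_swap_image_fst)
  moreover have "\<forall>v \<in> V - (V - D). (\<Sum>p \<in> {p \<in> Zset (V - D) V E. snd p = v}. (z \<circ> prod.swap) p) = s"
    using head DV by (auto simp: Z sum_swap_image_snd)
  ultimately show ?thesis unfolding is_dissolution_def by blast
qed

theorem lemma1:
  fixes V :: "'a set" and E :: "'a \<Rightarrow> 'a \<Rightarrow> bool" and s d :: nat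
  assumes "graph V E" and "0 < s" and "0 < d"
  shows "has_dissolution s d V E \<longleftrightarrow> has_dissolution d s V E"
  using is_dissolution_complement[OF assms(1) assms(3), of s]
    is_dissolution_complement[OF assms(1) assms(2), of d]
  unfolding has_dissolution_def by blast

end
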